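(* Let $n\ge 4$ and let $G$ be a graph having the maximum value of $cM_2$ among all connected graphs of order $n$. Then no two vertices of minimum degree in $G$ are adjacent.
   Context: All graphs are finite and simple. For a graph $G$ and a vertex $u$, $d_u(G)$ denotes the degree of $u$ in $G$. The complementary second Zagreb index of $G$ is $cM_2(G)=\sum_{uv\in E(G)}\left|(d_u(G))^2-(d_v(G))^2\right|$. *)

theory Defs
  imports Main
begin

definition simple_graph :: "'a set \<Rightarrow> 'a set set \<Rightarrow> bool" where
  "simple_graph V E \<longleftrightarrow> finite V \<and> (\<forall>e\<in>E. e \<subseteq> V \<and> card e = 2)"

definition degree :: "'a set set \<Rightarrow> 'a \<Rightarrow> nat" where
  "degree E u = card {e \<in> E. u \<in> e}"

definition adjacent :: "'a set set \<Rightarrow> 'a \<Rightarrow> 'a \<Rightarrow> bool" where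
  "adjacent E u v \<longleftrightarrow> {u, v} \<in> E"

definition connected_graph :: "'a set \<Rightarrow> 'a set set \<Rightarrow> bool" where
  "connected_graph V E \<longleftrightarrow> V \<noteq> {} \<and>
     (\<forall>u\<in>V. \<forall>v\<in>V. (u, v) \<in> {(x, y). adjacent E x y}\<^sup>*)"

definition cM2 :: "'a set set \<Rightarrow> nat" where
  "cM2 E = (\<Sum>e\<in>E. (THE k. \<exists>u v. e = {u, v} \<and> u \<noteq> v \<and>
      int k = \<bar>int (degree E u) ^ 2 - int (degree E v) ^ 2\<bar>))"

end

theory Submission
  imports Defs
begin

(*
  Suppose two vertices u, v of minimum degree are adjacent, and let x be a vertex of maximum
  degree among the remaining ones. Reroute the edge uv through x: delete uv and add whichever of
  ux, vx is missing. The graph stays simple and connected on the same vertex set. The degrees of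
  u and v do not grow, that of x does not shrink and all others are unchanged; since u, v have the
  smallest and x the largest degree, no edge weight |d_a^2 - d_b^2| decreases, while the deleted
  edge uv had weight 0. The edge ux gains strictly: either it was present and d_u dropped by one,
  or it is new and d_u < d_x. So cM2 increases, contradicting maximality.
*)

lemma finite_obtains_arg_max:
  fixes f :: "'a \<Rightarrow> 'b::linorder"
  assumes "finite A" "A \<noteq> {}"
  obtains x where "x \<in> A" "\<forall>y\<in>A. f y \<le> f x"
proof -
  have "Max (f ` A) \<in> f ` A"
    using assms by (intro Max_in) auto
  then obtain x where "x \<in> A" "Max (f ` A) = f x"
    by blast
  moreover have "\<forall>y\<in>A. f y \<le> Max (f ` A)"
    using assms(1) by (intro ballI Max_ge) auto
  ultimately show thesis
    using that by simp
qed

lemma sum_less_sum_insert: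
  fixes f g :: "'a \<Rightarrow> nat"
  assumes "finite A" "\<forall>a\<in>A. f a \<le> g a" "if y \<in> A then f y < g y else 0 < g y"
  shows "sum f A < sum g (insert y A)"
proof (cases "y \<in> A")
  case True
  then show ?thesis
    using assms by (simp add: insert_absorb) (intro sum_strict_mono_ex1; blast)
next
  case False
  have "sum f A \<le> sum g A"
    using assms(2) by (intro sum_mono) auto
  then show ?thesis
    using assms False by simp
qed

definition sq_gap :: "nat \<Rightarrow> nat \<Rightarrow> nat" where
  "sq_gap p q = nat \<bar>int p ^ 2 - int q ^ 2\<bar>"

lemma sq_gap_commute: "sq_gap p q = sq_gap q p"
  unfolding sq_gap_def by (simp add: abs_minus_commute)

lemma sq_gap_self [simp]: "sq_gap p p = 0"
  unfolding sq_gap_def by simp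

lemma sq_gap_pos: "q < p \<Longrightarrow> 0 < sq_gap p q"
  unfolding sq_gap_def by (simp add: power_strict_mono)

lemma sq_gap_mono:
  assumes "q' \<le> q" "q \<le> p" "p \<le> p'"
  shows "sq_gap p q \<le> sq_gap p' q'"
proof -
  have "nat \<bar>A - B\<bar> \<le> nat \<bar>C - D\<bar>" if "D \<le> B" "B \<le> A" "A \<le> C" for A B C D :: int
    using that by simp
  then show ?thesis
    unfolding sq_gap_def by this (use assms in \<open>simp_all add: power_mono\<close>)
qed

lemma sq_gap_strict_mono:
  assumes "q' < q" "q \<le> p" "p \<le> p'"
  shows "sq_gap p q < sq_gap p' q'"
proof -
  have "nat \<bar>A - B\<bar> < nat \<bar>C - D\<bar>" if "D < B" "B \<le> A" "A \<le> C" for A B C D :: int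
    using that by simp
  then show ?thesis
    unfolding sq_gap_def by this (use assms in \<open>simp_all add: power_mono power_strict_mono\<close>)
qed

lemma sq_gap_mono_spread:
  fixes d d' :: "'a \<Rightarrow> nat"
  assumes "a \<in> V" "b \<in> V" "{a, b} \<noteq> {u, v}"
    and min: "\<forall>w\<in>V. d u \<le> d w \<and> d v \<le> d w"
    and max: "\<forall>w\<in>V. d w \<le> d x"
    and dec: "d' u \<le> d u" "d' v \<le> d v"
    and inc: "d x \<le> d' x"
    and unchanged: "\<forall>w\<in>V - {u, v, x}. d' w = d w"
  shows "sq_gap (d a) (d b) \<le> sq_gap (d' a) (d' b)"
proof -
  have spread: "sq_gap (d s) (d t) \<le> sq_gap (d' s) (d' t)"
    if "d' s \<le> d s" "d s \<le> d t" "d t \<le> d' t" for s t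
    using sq_gap_mono[OF that] by (simp add: sq_gap_commute)
  have grow: "d w \<le> d' w" if "w \<in> V" "w \<notin> {u, v}" for w
    using that inc unchanged by (cases "w = x") auto
  consider "a \<in> {u, v}" "b \<notin> {u, v}" | "a \<notin> {u, v}" "b \<in> {u, v}" | "a = b"
    | "a \<notin> {u, v}" "b \<notin> {u, v}" "a \<noteq> b"
    using assms(3) by blast
  then show ?thesis
  proof cases
    case 1
    then show ?thesis using spread[of a b] grow[of b] assms(1,2) min dec by auto
  next
    case 2
    then show ?thesis using spread[of b a] grow[of a] assms(1,2) min dec by (auto simp: sq_gap_commute)
  next
    case 4
    then consider "a = x" "b \<in> V - {u, v, x}" | "b = x" "a \<in> V - {u, v, x}" | "a \<in> V - {u, v, x}" "b \<in> V - {u, v, x}"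
      using assms(1,2) by blast
    then show ?thesis
      by cases (use spread[of b a] spread[of a b] max inc unchanged assms(1,2) in \<open>auto simp: sq_gap_commute\<close>)
  qed simp
qed

definition cM2_edge :: "'a set set \<Rightarrow> 'a set \<Rightarrow> nat" where
  "cM2_edge E e = (THE k. \<exists>u v. e = {u, v} \<and> u \<noteq> v \<and>
      int k = \<bar>int (degree E u) ^ 2 - int (degree E v) ^ 2\<bar>)"

lemma cM2_eq_sum: "cM2 E = (\<Sum>e\<in>E. cM2_edge E e)"
  unfolding cM2_def cM2_edge_def ..

lemma cM2_edge_doubleton:
  assumes "a \<noteq> b"
  shows "cM2_edge E {a, b} = sq_gap (degree E a) (degree E b)"
  unfolding cM2_edge_def
proof (rule the_equality)
  show "\<exists>u v. {a, b} = {u, v} \<and> u \<noteq> v \<and>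
      int (sq_gap (degree E a) (degree E b)) = \<bar>int (degree E u) ^ 2 - int (degree E v) ^ 2\<bar>"
    using assms unfolding sq_gap_def by (intro exI[of _ a] exI[of _ b]) simp
next
  fix k assume "\<exists>u v. {a, b} = {u, v} \<and> u \<noteq> v \<and>
      int k = \<bar>int (degree E u) ^ 2 - int (degree E v) ^ 2\<bar>"
  then obtain u v where "{a, b} = {u, v}" and "int k = int (sq_gap (degree E u) (degree E v))"
    unfolding sq_gap_def by auto
  then show "k = sq_gap (degree E a) (degree E b)"
    by (auto simp: doubleton_eq_iff sq_gap_commute)
qed

lemma simple_graph_finite_edges: "simple_graph V E \<Longrightarrow> finite E"
  unfolding simple_graph_def by (meson PowI finite_Pow_iff finite_subset subsetI)

lemma Diff_doubleton_nonempty: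
  assumes "2 < card V"
  shows "V - {u, v} \<noteq> {}"
proof
  assume "V - {u, v} = {}"
  then have "card V \<le> card {u, v}"
    by (intro card_mono) auto
  also have "\<dots> \<le> 2"
    by (cases "u = v") auto
  finally show False
    using assms by simp
qed

lemma degree_insert:
  "finite E \<Longrightarrow> degree (insert e E) a = degree E a + (if a \<in> e \<and> e \<notin> E then 1 else 0)"
proof -
  assume "finite E"
  moreover have "{e' \<in> insert e E. a \<in> e'} = (if a \<in> e then insert e {e' \<in> E. a \<in> e'} else {e' \<in> E. a \<in> e'})"
    by auto
  ultimately show ?thesis unfolding degree_def by (auto simp: card_insert_if)
qed

lemma degree_Diff_singleton:
  "finite E \<Longrightarrow> degree (E - {e}) a = degree E a - (if a \<in> e \<and> e \<in> E then 1 else 0)"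
proof -
  assume "finite E"
  moreover have "{e' \<in> E - {e}. a \<in> e'} = {e' \<in> E. a \<in> e'} - {e}" by auto
  ultimately show ?thesis unfolding degree_def by (auto simp: card_Diff_singleton_if)
qed

lemma degree_pos: "finite E \<Longrightarrow> e \<in> E \<Longrightarrow> a \<in> e \<Longrightarrow> 0 < degree E a"
  unfolding degree_def by (subst card_gt_0_iff) auto

lemma cM2_edge_mono_spread:
  assumes E: "simple_graph V E" and e: "e \<in> E" "e \<noteq> {u, v}"
    and min: "\<forall>w\<in>V. degree E u \<le> degree E w \<and> degree E v \<le> degree E w"
    and max: "\<forall>w\<in>V. degree E w \<le> degree E x"
    and dec: "degree E' u \<le> degree E u" "degree E' v \<le> degree E v"
    and inc: "degree E x \<le> degree E' x"
    and unchanged: "\<forall>w\<in>V - {u, v, x}. degree E' w = degree E w"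
  shows "cM2_edge E e \<le> cM2_edge E' e"
proof -
  obtain a b where ab: "e = {a, b}" "a \<noteq> b"
    using E e unfolding simple_graph_def by (meson card_2_iff)
  have "a \<in> V" "b \<in> V"
    using E e ab unfolding simple_graph_def by auto
  then have "sq_gap (degree E a) (degree E b) \<le> sq_gap (degree E' a) (degree E' b)"
    using e(2) ab min max dec inc unchanged by (intro sq_gap_mono_spread[where x = x]) auto
  then show ?thesis
    unfolding ab using ab(2) by (simp add: cM2_edge_doubleton)
qed

lemma connected_graph_if_edges_connected:
  assumes "connected_graph V E"
    and "\<And>a b. {a, b} \<in> E \<Longrightarrow> (a, b) \<in> {(x, y). adjacent E' x y}\<^sup>*"
  shows "connected_graph V E'"
proof -
  have "{(x, y). adjacent E x y} \<subseteq> {(x, y). adjacent E' x y}\<^sup>*"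
    using assms(2) by (auto simp: adjacent_def)
  then have "{(x, y). adjacent E x y}\<^sup>* \<subseteq> {(x, y). adjacent E' x y}\<^sup>*"
    by (rule rtrancl_subset_rtrancl)
  then show ?thesis using assms(1) unfolding connected_graph_def by blast
qed

lemma simple_graph_reroute:
  assumes "simple_graph V E" "u \<in> V" "v \<in> V" "x \<in> V" "x \<noteq> u" "x \<noteq> v"
  shows "simple_graph V (insert {u, x} (insert {v, x} (E - {{u, v}})))"
  using assms unfolding simple_graph_def by auto

lemma connected_graph_reroute:
  assumes "connected_graph V E"
  shows "connected_graph V (insert {u, x} (insert {v, x} (E - {{u, v}})))"
    (is "connected_graph V ?E'")
proof (rule connected_graph_if_edges_connected[OF assms])
  fix a b assume ab: "{a, b} \<in> E"
  show "(a, b) \<in> {(x, y). adjacent ?E' x y}\<^sup>*"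
  proof (cases "{a, b} = {u, v}")
    case True
    then have "(a, x) \<in> {(x, y). adjacent ?E' x y}" "(x, b) \<in> {(x, y). adjacent ?E' x y}"
      by (auto simp: adjacent_def doubleton_eq_iff insert_commute)
    then show ?thesis by (meson r_into_rtrancl rtrancl_trans)
  next
    case False
    then show ?thesis using ab by (auto simp: adjacent_def)
  qed
qed

lemma degree_reroute:
  assumes "finite E" "{u, v} \<in> E" "u \<noteq> v" "x \<noteq> u" "x \<noteq> v"
  defines "E' \<equiv> insert {u, x} (insert {v, x} (E - {{u, v}}))"
  shows "degree E' u = degree E u - 1 + (if {u, x} \<in> E then 0 else 1)"
    and "degree E' v = degree E v - 1 + (if {v, x} \<in> E then 0 else 1)"
    and "degree E' x = degree E x + (if {u, x} \<in> E then 0 else 1) + (if {v, x} \<in> E then 0 else 1)"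
    and "w \<notin> {u, v, x} \<Longrightarrow> degree E' w = degree E w"
  using assms by (simp_all add: degree_insert degree_Diff_singleton doubleton_eq_iff)

lemma cM2_edge_reroute_gain:
  assumes "finite E" "{u, v} \<in> E" "u \<noteq> v" "x \<noteq> u" "x \<noteq> v" "degree E u \<le> degree E x"
  defines "E' \<equiv> insert {u, x} (insert {v, x} (E - {{u, v}}))"
  shows "if {u, x} \<in> E - {{u, v}} then cM2_edge E {u, x} < cM2_edge E' {u, x}
         else 0 < cM2_edge E' {u, x}"
proof -
  have "0 < degree E u"
    using assms(1,2) by (auto intro: degree_pos)
  note deg = degree_reroute(1,3)[OF assms(1-5), folded E'_def]
  show ?thesis
  proof (cases "{u, x} \<in> E")
    case True
    then have "degree E' u < degree E u" "degree E x \<le> degree E' x"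
      using \<open>0 < degree E u\<close> deg by auto
    then have "sq_gap (degree E x) (degree E u) < sq_gap (degree E' x) (degree E' u)"
      using assms(6) by (intro sq_gap_strict_mono)
    then show ?thesis
      using True assms(4,5) by (simp add: cM2_edge_doubleton sq_gap_commute doubleton_eq_iff)
  next
    case False
    then have "degree E' u < degree E' x"
      using \<open>0 < degree E u\<close> deg assms(6) by auto
    then have "0 < sq_gap (degree E' x) (degree E' u)"
      by (rule sq_gap_pos)
    then show ?thesis
      using False assms(4) by (simp add: cM2_edge_doubleton sq_gap_commute)
  qed
qed

lemma cM2_less_reroute:
  assumes E: "simple_graph V E" and uv: "{u, v} \<in> E"
    and x: "x \<in> V" "x \<noteq> u" "x \<noteq> v"
    and min: "\<forall>w\<in>V. degree E u \<le> degree E w \<and> degree E v \<le> degree E w"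
    and max: "\<forall>w\<in>V. degree E w \<le> degree E x"
  shows "cM2 E < cM2 (insert {u, x} (insert {v, x} (E - {{u, v}})))"
proof -
  define E0 where "E0 = E - {{u, v}}"
  define E' where "E' = insert {u, x} (insert {v, x} E0)"
  have finE: "finite E"
    using E by (rule simple_graph_finite_edges)
  have "{u, v} \<subseteq> V" "card {u, v} = 2"
    using E uv unfolding simple_graph_def by auto
  then have uv_ne: "u \<noteq> v" and "u \<in> V" "v \<in> V"
    by (auto simp: card_insert_if split: if_splits)
  note deg = degree_reroute[OF finE uv uv_ne x(2,3), folded E0_def E'_def]
  have "0 < degree E u" "0 < degree E v"
    using finE uv by (auto intro: degree_pos)
  then have "degree E' u \<le> degree E u" "degree E' v \<le> degree E v" "degree E x \<le> degree E' x"
    "\<forall>w\<in>V - {u, v, x}. degree E' w = degree E w"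
    using deg by auto
  then have "\<forall>e\<in>E0. cM2_edge E e \<le> cM2_edge E' e"
    using E min max unfolding E0_def by (blast intro: cM2_edge_mono_spread[where x = x])
  moreover have "if {u, x} \<in> E0 then cM2_edge E {u, x} < cM2_edge E' {u, x} else 0 < cM2_edge E' {u, x}"
    using max \<open>u \<in> V\<close> unfolding E0_def E'_def by (intro cM2_edge_reroute_gain[OF finE uv uv_ne x(2,3)]) blast
  moreover have "finite E0"
    using finE unfolding E0_def by simp
  moreover have "degree E u = degree E v"
    using min \<open>u \<in> V\<close> \<open>v \<in> V\<close> by (simp add: le_antisym)
  then have "cM2 E = (\<Sum>e\<in>E0. cM2_edge E e)"
    unfolding cM2_eq_sum E0_def using finE uv uv_ne by (simp add: sum.remove cM2_edge_doubleton)
  ultimately have "cM2 E < (\<Sum>e\<in>insert {u, x} E0. cM2_edge E' e)"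
    by (simp add: sum_less_sum_insert)
  also have "\<dots> \<le> cM2 E'"
    unfolding cM2_eq_sum E'_def using finE unfolding E0_def by (intro sum_mono2) auto
  finally show ?thesis
    unfolding E'_def E0_def .
qed

theorem proposition2:
  fixes V :: "'a set" and E :: "'a set set" and n :: nat
  assumes "n \<ge> 4"
    and "simple_graph V E" and "connected_graph V E" and "card V = n"
    and "\<forall>(V' :: 'a set) E'. simple_graph V' E' \<and> connected_graph V' E' \<and> card V' = n
               \<longrightarrow> cM2 E' \<le> cM2 E"
  shows "\<forall>u\<in>V. \<forall>v\<in>V.
           degree E u = (MIN w\<in>V. degree E w) \<and> degree E v = (MIN w\<in>V. degree E w)
           \<longrightarrow> \<not> adjacent E u v"
proof (intro ballI impI notI)
  fix u v assume "u \<in> V" "v \<in> V"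
    and min_deg: "degree E u = (MIN w\<in>V. degree E w) \<and> degree E v = (MIN w\<in>V. degree E w)"
    and "adjacent E u v"
  have finV: "finite V"
    using assms(2) unfolding simple_graph_def by blast
  have min: "\<forall>w\<in>V. degree E u \<le> degree E w \<and> degree E v \<le> degree E w"
    using min_deg finV by simp
  have "V - {u, v} \<noteq> {}"
    using assms(1,4) by (intro Diff_doubleton_nonempty) simp
  moreover have "finite (V - {u, v})"
    using finV by simp
  ultimately obtain x where x: "x \<in> V - {u, v}" "\<forall>w\<in>V - {u, v}. degree E w \<le> degree E x"
    by (metis finite_obtains_arg_max)
  then have max: "\<forall>w\<in>V. degree E w \<le> degree E x"
    using min by auto
  let ?E' = "insert {u, x} (insert {v, x} (E - {{u, v}}))"
  have "{u, v} \<in> E"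
    using \<open>adjacent E u v\<close> unfolding adjacent_def .
  then have "cM2 E < cM2 ?E'"
    using x(1) min max by (intro cM2_less_reroute[OF assms(2)]) auto
  moreover have "simple_graph V ?E'"
    using x(1) \<open>u \<in> V\<close> \<open>v \<in> V\<close> by (intro simple_graph_reroute[OF assms(2)]) auto
  moreover have "connected_graph V ?E'"
    by (rule connected_graph_reroute[OF assms(3)])
  ultimately show False
    using assms(4) assms(5)[rule_format, of V ?E'] by simp
qed

end
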